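(* Consider the CDM model with $\tilde{\lambda}_i>z_i>0$ for all $i\in\mathcal{M}$ and nonnegative $\bm{A}$ satisfying $$A_{ii}>\sum_{j\in\mathcal{M}\setminus\{i\}}A_{ij}\quad\text{for all } i\in\mathcal{M}.$$ Then $\bm{A}$ is nonsingular; every $\bm{x}^\ast>\bm{0}$ is the interior equilibrium of the CDM model for a (unique) associated parameter vector $\bm{q}>\bm{0}$; and for any $\bm{q}>\bm{0}$ for which the interior equilibrium $\bm{x}^\ast>\bm{0}$ exists, the corresponding equilibrium $\bm{y}^\ast$ of the age-structured CDM map is locally asymptotically stable, i.e. the Jacobian $\bm{J}^\ast$ of that map at $\bm{y}^\ast$ satisfies $\rho(\bm{J}^\ast)<1$. (The condition does not depend on the delays $\delta_i$.)
   Context: CDM model: $m\ge1$ species $\mathcal{M}=\{1,\dots,m\}$, delays $\delta_i\in\{0,1,\dots\}$, survival probabilities $\sigma_{a\mid i}\in(0,1]$ ($a<\delta_i$), adult survival $\sigma_{\delta_i\mid i}\in(0,1)$, $z_i=1-\sigma_{\delta_i\mid i}$, fecundity $\lambda_i>0$, $\tilde\lambda_i=\lambda_i\prod_{a=0}^{\delta_i-1}\sigma_{a\mid i}$ (empty product $=1$), $\bm{A}\ge\bm{0}$ ($m\times m$), $\bm{q}>\bm{0}$. Per capita growth $G_i(\bm{x})=\lambda_i/(1+q_i^{-1}\sum_{k}A_{ik}x_k)$. Age-structured map $h$ on $\bm{y}=(y_{a\mid i})$, $0\le a\le\delta_i$, with adults $\bm{x}=(y_{\delta_1\mid1},\dots,y_{\delta_m\mid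 m})^\top$: if $\delta_i>0$, $h_{0\mid i}(\bm{y})=G_i(\bm{x})y_{\delta_i\mid i}$, $h_{a\mid i}(\bm{y})=\sigma_{a-1\mid i}y_{a-1\mid i}$ ($1\le a\le\delta_i-1$), $h_{\delta_i\mid i}(\bm{y})=\sigma_{\delta_i-1\mid i}y_{\delta_i-1\mid i}+\sigma_{\delta_i\mid i}y_{\delta_i\mid i}$; if $\delta_i=0$, $h_{0\mid i}(\bm{y})=\sigma_{0\mid i}y_{0\mid i}+G_i(\bm{x})y_{0\mid i}$. Equivalently adults satisfy $x_i(t+1)=\sigma_{\delta_i\mid i}x_i(t)+\tilde\lambda_ix_i(t-\delta_i)/(1+q_i^{-1}\sum_kA_{ik}x_k(t-\delta_i))$. An interior equilibrium is $\bm{x}^\ast>\bm{0}$ satisfying $\bm{A}\bm{x}^\ast=\mathrm{diag}[\bm{\tilde\lambda}-\bm{z}]\mathrm{diag}[\bm{z}]^{-1}\bm{q}$; the full equilibrium $\bm{y}^\ast$ has $y^\ast_{\delta_i\mid i}=x_i^\ast$ and immature classes determined by $h(\bm{y}^\ast)=\bm{y}^\ast$. $\rho$ denotes spectral radius. *)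

theory Defs
  imports "HOL-Analysis.Derivative" "Jordan_Normal_Form.Spectral_Radius"
begin

no_notation Finite_Cartesian_Product.vec_nth (infixl "$" 90)
no_notation Finite_Cartesian_Product.matrix_vector_mult (infixl "*v" 70)

text \<open>Species are indexed by 0..<m. Age classes of species i are a = 0..delta i.
  A state y of the age-structured map assigns to each pair (a, i) the density of
  age class a of species i. sigma a i is the survival probability of age class a of
  species i (sigma (delta i) i is adult survival).\<close>

definition cdm_ltilde :: "(nat \<Rightarrow> nat) \<Rightarrow> (nat \<Rightarrow> nat \<Rightarrow> real) \<Rightarrow> (nat \<Rightarrow> real) \<Rightarrow> nat \<Rightarrow> real" where
  "cdm_ltilde delta sigma lam i = lam i * (\<Prod>a<delta i. sigma a i)"

definition cdm_z :: "(nat \<Rightarrow> nat) \<Rightarrow> (nat \<Rightarrow> nat \<Rightarrow> real) \<Rightarrow> nat \<Rightarrow> real" where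
  "cdm_z delta sigma i = 1 - sigma (delta i) i"

definition cdm_G :: "nat \<Rightarrow> (nat \<Rightarrow> real) \<Rightarrow> real mat \<Rightarrow> real vec \<Rightarrow> nat \<Rightarrow> real vec \<Rightarrow> real" where
  "cdm_G m lam A q i x = lam i / (1 + (\<Sum>k<m. A $$ (i, k) * x $ k) / q $ i)"

definition cdm_adults :: "nat \<Rightarrow> (nat \<Rightarrow> nat) \<Rightarrow> (nat \<times> nat \<Rightarrow> real) \<Rightarrow> real vec" where
  "cdm_adults m delta y = vec m (\<lambda>k. y (delta k, k))"

definition cdm_h :: "nat \<Rightarrow> (nat \<Rightarrow> nat) \<Rightarrow> (nat \<Rightarrow> nat \<Rightarrow> real) \<Rightarrow> (nat \<Rightarrow> real) \<Rightarrow> real mat \<Rightarrow> real vec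
    \<Rightarrow> (nat \<times> nat \<Rightarrow> real) \<Rightarrow> (nat \<times> nat \<Rightarrow> real)" where
  "cdm_h m delta sigma lam A q y = (\<lambda>(a, i).
     (let g = cdm_G m lam A q i (cdm_adults m delta y) in
      if delta i > 0 then
        (if a = 0 then g * y (delta i, i)
         else if a < delta i then sigma (a - 1) i * y (a - 1, i)
         else sigma (delta i - 1) i * y (delta i - 1, i) + sigma (delta i) i * y (delta i, i))
      else sigma 0 i * y (0, i) + g * y (0, i)))"

definition cdm_states :: "nat \<Rightarrow> (nat \<Rightarrow> nat) \<Rightarrow> (nat \<times> nat) list" where
  "cdm_states m delta = concat (map (\<lambda>i. map (\<lambda>a. (a, i)) [0..<Suc (delta i)]) [0..<m])"

definition cdm_jacobian :: "nat \<Rightarrow> (nat \<Rightarrow> nat) \<Rightarrow> (nat \<Rightarrow> nat \<Rightarrow> real) \<Rightarrow> (nat \<Rightarrow> real) \<Rightarrow> real mat \<Rightarrow> real vec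
    \<Rightarrow> (nat \<times> nat \<Rightarrow> real) \<Rightarrow> real mat" where
  "cdm_jacobian m delta sigma lam A q y =
     (let S = cdm_states m delta in
      mat (length S) (length S) (\<lambda>(r, s).
        deriv (\<lambda>t. cdm_h m delta sigma lam A q (y (S ! s := t)) (S ! r)) (y (S ! s))))"

end

theory Submission
  imports Defs
begin

text \<open>Nonnegative entries with strict diagonal dominance make \<open>A\<close> nonsingular and
  \<open>A x\<close> positive for \<open>x > 0\<close>, so each \<open>x > 0\<close> determines \<open>q > 0\<close> by dividing \<open>A x\<close>
  componentwise by the positive factors of the equilibrium equation.

  For stability, let \<open>V\<close> be an eigenvector of the Jacobian for an eigenvalue \<open>\<mu>\<close> with
  \<open>|\<mu>| \<ge> 1\<close>. Along the juvenile chain of species \<open>i\<close> the coordinates of \<open>V\<close> are determined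
  by the newborn coordinate, and eliminating the chain leaves, for the adult coordinates \<open>U\<close>,
  \<open>\<mu>^\<delta>\<^sub>i (\<mu> - \<sigma>\<^sub>\<delta>\<^sub>i) U\<^sub>i = z\<^sub>i U\<^sub>i - w\<^sub>i \<Sum>\<^sub>k A\<^sub>i\<^sub>k U\<^sub>k\<close>
  with \<open>0 < w\<^sub>i\<close> and \<open>w\<^sub>i A\<^sub>i\<^sub>i \<le> z\<^sub>i\<close>: at the equilibrium the offspring surviving to
  adulthood exactly replace adult mortality \<open>z\<^sub>i\<close>. At an index where \<open>|U\<^sub>i|\<close> is maximal,
  \<open>|\<mu>^\<delta>\<^sub>i (\<mu> - \<sigma>\<^sub>\<delta>\<^sub>i)| \<ge> z\<^sub>i\<close> together with diagonal dominance rules this identity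
  out unless \<open>U\<^sub>i = 0\<close>. So all adult coordinates vanish, and then so does \<open>V\<close>.\<close>

lemma finite_has_max_index:
  fixes f :: "'a \<Rightarrow> 'b::linorder"
  assumes "finite S" "S \<noteq> {}"
  obtains i where "i \<in> S" "\<And>k. k \<in> S \<Longrightarrow> f k \<le> f i"
proof -
  obtain i where "i \<in> S" "Max (f ` S) = f i" using obtains_MAX[OF assms] .
  then show ?thesis using that assms by (metis Max_ge finite_imageI image_eqI)
qed

lemma offdiag_sum_norm_le:
  fixes u :: "nat \<Rightarrow> 'a::real_normed_vector"
  assumes "i < m" and "\<And>k. k < m \<Longrightarrow> 0 \<le> a k" and "\<And>k. k < m \<Longrightarrow> norm (u k) \<le> norm (u i)"
  shows "norm ((\<Sum>k<m. a k *\<^sub>R u k) - a i *\<^sub>R u i) \<le> (\<Sum>k\<in>{0..<m} - {i}. a k) * norm (u i)"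
proof -
  have "(\<Sum>k<m. a k *\<^sub>R u k) - a i *\<^sub>R u i = (\<Sum>k\<in>{0..<m} - {i}. a k *\<^sub>R u k)"
    using assms(1) by (simp add: sum.remove atLeast0LessThan)
  also have "norm \<dots> \<le> (\<Sum>k\<in>{0..<m} - {i}. a k * norm (u i))"
    using assms by (intro norm_sum[THEN order_trans] sum_mono) (auto intro: mult_left_mono)
  finally show ?thesis by (simp add: sum_distrib_right)
qed

lemma mult_mat_vec_index_sum:
  assumes "A \<in> carrier_mat m m" "dim_vec x = m" "i < m"
  shows "(A *\<^sub>v x) $ i = (\<Sum>k<m. A $$ (i, k) * x $ k)"
  using assms by (simp add: scalar_prod_def atLeast0LessThan row_def)

lemma diag_dominant_invertible_mat:
  fixes A :: "real mat"
  assumes A: "A \<in> carrier_mat m m"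
    and nonneg: "\<And>i j. i < m \<Longrightarrow> j < m \<Longrightarrow> A $$ (i, j) \<ge> 0"
    and dominant: "\<And>i. i < m \<Longrightarrow> A $$ (i, i) > (\<Sum>j\<in>{0..<m} - {i}. A $$ (i, j))"
  shows "invertible_mat A"
proof -
  have "det A \<noteq> 0"
  proof
    assume "det A = 0"
    then obtain v where v: "v \<in> carrier_vec m" "v \<noteq> 0\<^sub>v m" "A *\<^sub>v v = 0\<^sub>v m"
      using det_0_iff_vec_prod_zero[OF A] by auto
    then obtain j where j: "j < m" "v $ j \<noteq> 0" by (metis carrier_vecD eq_vecI index_zero_vec)
    obtain i where i: "i < m" and imax: "\<And>k. k < m \<Longrightarrow> \<bar>v $ k\<bar> \<le> \<bar>v $ i\<bar>"
      using finite_has_max_index[of "{..<m}" "\<lambda>k. \<bar>v $ k\<bar>"] j by auto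
    have vi: "\<bar>v $ i\<bar> > 0" using imax[OF j(1)] j by simp
    have "(\<Sum>k<m. A $$ (i, k) * v $ k) = 0"
      using mult_mat_vec_index_sum[OF A _ i, of v] v i by simp
    then have "A $$ (i, i) * \<bar>v $ i\<bar> \<le> (\<Sum>j\<in>{0..<m} - {i}. A $$ (i, j)) * \<bar>v $ i\<bar>"
      using offdiag_sum_norm_le[of i m "\<lambda>k. A $$ (i, k)" "\<lambda>k. v $ k"] i nonneg imax
      by (simp add: abs_mult)
    then show False using dominant[OF i] vi by simp
  qed
  then obtain B where "B \<in> carrier_mat m m" "B * A = 1\<^sub>m m" "A * B = 1\<^sub>m m"
    using det_non_zero_imp_unit[OF A, of "()"] unfolding Units_def ring_mat_def by auto
  then show ?thesis unfolding invertible_mat_def inverts_mat_def using A by auto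
qed

lemma diag_dominant_mult_pos:
  fixes A :: "real mat"
  assumes A: "A \<in> carrier_mat m m"
    and nonneg: "\<And>i j. i < m \<Longrightarrow> j < m \<Longrightarrow> A $$ (i, j) \<ge> 0"
    and dominant: "\<And>i. i < m \<Longrightarrow> A $$ (i, i) > (\<Sum>j\<in>{0..<m} - {i}. A $$ (i, j))"
    and x: "dim_vec x = m" "\<And>i. i < m \<Longrightarrow> x $ i > 0"
    and i: "i < m"
  shows "(A *\<^sub>v x) $ i > 0"
proof -
  have "0 \<le> (\<Sum>j\<in>{0..<m} - {i}. A $$ (i, j))" using nonneg i by (intro sum_nonneg) auto
  then have "0 < A $$ (i, i) * x $ i" using dominant[OF i] x(2)[OF i] by simp
  also have "\<dots> \<le> (\<Sum>k<m. A $$ (i, k) * x $ k)"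
    using member_le_sum[of i "{..<m}" "\<lambda>k. A $$ (i, k) * x $ k"] i nonneg x by (simp add: less_imp_le)
  finally show ?thesis using mult_mat_vec_index_sum[OF A x(1) i] by simp
qed

lemma ex1_pos_scaling:
  fixes b :: "real vec"
  assumes "dim_vec b = m" "\<And>i. i < m \<Longrightarrow> b $ i > 0" "\<And>i. i < m \<Longrightarrow> c i > 0"
  shows "\<exists>!q. dim_vec q = m \<and> (\<forall>i<m. q $ i > 0) \<and> b = vec m (\<lambda>i. c i * q $ i)"
proof -
  have c: "\<And>i. i < m \<Longrightarrow> c i \<noteq> 0" using assms(3) by (metis less_irrefl)
  show ?thesis
  proof (rule ex1I[of _ "vec m (\<lambda>i. b $ i / c i)"])
    fix q assume "dim_vec q = m \<and> (\<forall>i<m. q $ i > 0) \<and> b = vec m (\<lambda>i. c i * q $ i)"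
    then show "q = vec m (\<lambda>i. b $ i / c i)" using c by auto
  qed (use assms c in \<open>auto\<close>)
qed

lemma mem_cdm_states: "p \<in> set (cdm_states m delta) \<longleftrightarrow> snd p < m \<and> fst p \<le> delta (snd p)"
  by (cases p) (force simp: cdm_states_def simp del: upt_Suc)

lemma distinct_cdm_states: "distinct (cdm_states m delta)"
  unfolding cdm_states_def
proof (rule distinct_concat)
  show "distinct (map (\<lambda>i. map (\<lambda>a. (a, i)) [0..<Suc (delta i)]) [0..<m])"
    by (auto simp: distinct_map inj_on_def simp: upt_conv_Cons simp del: upt_Suc dest!: arg_cong[where f = "snd \<circ> hd"])
qed (auto simp: distinct_map inj_on_def simp del: upt_Suc)

lemma sum_cdm_states_nth:
  "(\<Sum>j<length (cdm_states m delta). f (cdm_states m delta ! j)) = (\<Sum>p\<in>set (cdm_states m delta). f p)"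
  by (simp add: sum.distinct_set_conv_list[OF distinct_cdm_states] sum_list_sum_nth atLeast0LessThan)

definition cdm_denom :: "nat \<Rightarrow> (nat \<Rightarrow> nat) \<Rightarrow> real mat \<Rightarrow> real vec \<Rightarrow> (nat \<times> nat \<Rightarrow> real) \<Rightarrow> nat \<Rightarrow> real" where
  "cdm_denom m delta A q y i = 1 + (\<Sum>k<m. A $$ (i, k) * y (delta k, k)) / q $ i"

text \<open>Minus the partial derivative of \<open>G\<^sub>i\<close> with respect to \<open>(A x)\<^sub>i\<close>, times \<open>x\<^sub>i\<close>.\<close>

definition cdm_sensitivity :: "nat \<Rightarrow> (nat \<Rightarrow> nat) \<Rightarrow> (nat \<Rightarrow> real) \<Rightarrow> real mat \<Rightarrow> real vec
    \<Rightarrow> (nat \<times> nat \<Rightarrow> real) \<Rightarrow> nat \<Rightarrow> real" where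
  "cdm_sensitivity m delta lam A q y i = lam i * y (delta i, i) / (q $ i * (cdm_denom m delta A q y i)\<^sup>2)"

text \<open>It is generic in the coefficient type so that
  it describes both the columns of the real Jacobian (\<open>V\<close> a unit perturbation) and its
  action on complex eigenvectors.\<close>

definition cdm_linearization :: "nat \<Rightarrow> (nat \<Rightarrow> nat) \<Rightarrow> (nat \<Rightarrow> nat \<Rightarrow> real) \<Rightarrow> (nat \<Rightarrow> real) \<Rightarrow> real mat
    \<Rightarrow> real vec \<Rightarrow> (nat \<times> nat \<Rightarrow> real) \<Rightarrow> (nat \<times> nat \<Rightarrow> 'a::real_algebra_1) \<Rightarrow> nat \<times> nat \<Rightarrow> 'a" where
  "cdm_linearization m delta sigma lam A q y V = (\<lambda>(a, i).
     (let g = cdm_G m lam A q i (cdm_adults m delta y);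
          c = cdm_sensitivity m delta lam A q y i;
          F = (\<Sum>k<m. of_real (A $$ (i, k)) * V (delta k, k)) in
      if delta i > 0 then
        (if a = 0 then of_real g * V (delta i, i) - of_real c * F
         else if a < delta i then of_real (sigma (a - 1) i) * V (a - 1, i)
         else of_real (sigma (delta i - 1) i) * V (delta i - 1, i) + of_real (sigma (delta i) i) * V (delta i, i))
      else of_real (sigma 0 i + g) * V (0, i) - of_real c * F))"

lemma cdm_G_adults: "cdm_G m lam A q i (cdm_adults m delta y) = lam i / cdm_denom m delta A q y i"
  by (simp add: cdm_G_def cdm_denom_def cdm_adults_def)

lemma has_real_derivative_fun_upd: "((\<lambda>t. (y(s := t)) p) has_real_derivative of_bool (p = s)) (at (y s))"
  by (cases "p = s") auto

lemma cdm_G_has_partial: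
  assumes "cdm_denom m delta A q y i \<noteq> 0"
  shows "((\<lambda>t. cdm_G m lam A q i (cdm_adults m delta (y(s := t)))) has_real_derivative
    - (lam i / (q $ i * (cdm_denom m delta A q y i)\<^sup>2)) * (\<Sum>k<m. A $$ (i, k) * of_bool ((delta k, k) = s)))
    (at (y s))"
proof -
  let ?S = "\<lambda>t. \<Sum>k<m. A $$ (i, k) * (y(s := t)) (delta k, k)"
  let ?S' = "\<Sum>k<m. A $$ (i, k) * of_bool ((delta k, k) = s)"
  have "((\<lambda>t. 1 + ?S t / q $ i) has_real_derivative 0 + ?S' / q $ i) (at (y s))"
    by (intro DERIV_add DERIV_const DERIV_cdivide DERIV_sum DERIV_cmult has_real_derivative_fun_upd)
  from DERIV_divide[OF DERIV_const this, of "lam i"]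
  have "((\<lambda>t. lam i / (1 + ?S t / q $ i)) has_real_derivative
      (0 * cdm_denom m delta A q y i - lam i * (0 + ?S' / q $ i)) /
      (cdm_denom m delta A q y i * cdm_denom m delta A q y i)) (at (y s))"
    using assms by (simp add: cdm_denom_def)
  then show ?thesis
    by (simp add: cdm_G_def cdm_adults_def power2_eq_square field_simps)
qed

lemma cdm_h_has_partial:
  assumes "cdm_denom m delta A q y i \<noteq> 0"
  shows "((\<lambda>t. cdm_h m delta sigma lam A q (y(s := t)) (a, i)) has_real_derivative
    cdm_linearization m delta sigma lam A q y (\<lambda>p. of_bool (p = s)) (a, i)) (at (y s))"
proof -
  note G = cdm_G_has_partial[OF assms, of lam s]
  note e = has_real_derivative_fun_upd[of y s]
  consider "delta i > 0" "a = 0" | "0 < a" "a < delta i" | "delta i > 0" "\<not> a < delta i" | "delta i = 0"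
    by linarith
  then show ?thesis
  proof cases
    case 1
    then show ?thesis using DERIV_mult[OF G e[of "(delta i, i)"]]
      by (simp add: cdm_h_def cdm_linearization_def cdm_G_adults cdm_sensitivity_def Let_def field_simps)
  next
    case 2
    then show ?thesis using DERIV_cmult[OF e[of "(a - 1, i)"], of "sigma (a - 1) i"]
      by (simp add: cdm_h_def cdm_linearization_def Let_def)
  next
    case 3
    then show ?thesis
      using DERIV_add[OF DERIV_cmult[OF e[of "(delta i - 1, i)"]] DERIV_cmult[OF e[of "(delta i, i)"]]]
      by (simp add: cdm_h_def cdm_linearization_def Let_def)
  next
    case 4
    then show ?thesis
      using DERIV_add[OF DERIV_cmult[OF e[of "(0, i)"], of "sigma 0 i"] DERIV_mult[OF G e[of "(0, i)"]]]
      by (simp add: cdm_h_def cdm_linearization_def cdm_G_adults cdm_sensitivity_def Let_def field_simps)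
  qed
qed

lemma sum_of_real_of_bool_mult:
  fixes V :: "'b \<Rightarrow> 'a::real_algebra_1"
  assumes "finite S" "p0 \<in> S"
  shows "(\<Sum>p\<in>S. of_real (of_bool (p0 = p)) * V p) = V p0"
  using assms by (subst sum.cong[OF refl, where h = "\<lambda>p. if p0 = p then V p else 0"]) auto

lemma sum_adult_feedback:
  fixes V :: "nat \<times> nat \<Rightarrow> 'a::real_algebra_1"
  assumes "finite S" "\<And>k. k < m \<Longrightarrow> (delta k, k) \<in> S"
  shows "(\<Sum>p\<in>S. of_real (\<Sum>k<m. A $$ (i, k) * of_bool ((delta k, k) = p)) * V p)
    = (\<Sum>k<m. of_real (A $$ (i, k)) * V (delta k, k))"
proof -
  have "(\<Sum>p\<in>S. of_real (\<Sum>k<m. A $$ (i, k) * of_bool ((delta k, k) = p)) * V p)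
      = (\<Sum>k<m. of_real (A $$ (i, k)) * (\<Sum>p\<in>S. of_real (of_bool ((delta k, k) = p)) * V p))"
    by (simp only: of_real_sum of_real_mult sum_distrib_left sum_distrib_right mult.assoc) (rule sum.swap)
  also have "\<dots> = (\<Sum>k<m. of_real (A $$ (i, k)) * V (delta k, k))"
    using assms by (simp add: sum_of_real_of_bool_mult)
  finally show ?thesis .
qed

lemma cdm_linearization_eq_sum_partials:
  fixes V :: "nat \<times> nat \<Rightarrow> 'a::real_algebra_1"
  assumes r: "r \<in> set (cdm_states m delta)"
  shows "(\<Sum>p\<in>set (cdm_states m delta).
      of_real (cdm_linearization m delta sigma lam A q y (\<lambda>x. of_bool (x = p)) r) * V p)
    = cdm_linearization m delta sigma lam A q y V r"
proof -
  obtain a i where r_ai: "r = (a, i)" by (cases r)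
  with r have i: "i < m" and a: "a \<le> delta i" by (auto simp: mem_cdm_states)
  let ?S = "set (cdm_states m delta)"
  let ?L = "cdm_linearization m delta sigma lam A q y"
  have unit: "\<And>p0. p0 \<in> ?S \<Longrightarrow> (\<Sum>p\<in>?S. of_real (of_bool (p0 = p)) * V p) = V p0"
    by (simp add: sum_of_real_of_bool_mult)
  have feedback: "(\<Sum>p\<in>?S. of_real (\<Sum>k<m. A $$ (i, k) * of_bool ((delta k, k) = p)) * V p)
      = (\<Sum>k<m. of_real (A $$ (i, k)) * V (delta k, k))"
    by (rule sum_adult_feedback) (auto simp: mem_cdm_states)
  have combination: "?thesis"
    if "p1 \<in> ?S" "p2 \<in> ?S"
      and "\<And>p. ?L (\<lambda>x. of_bool (x = p)) r = c1 * of_bool (p1 = p) + c2 * of_bool (p2 = p)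
          - c3 * (\<Sum>k<m. A $$ (i, k) * of_bool ((delta k, k) = p))"
      and "?L V r = of_real c1 * V p1 + of_real c2 * V p2
          - of_real c3 * (\<Sum>k<m. of_real (A $$ (i, k)) * V (delta k, k))"
    for c1 c2 c3 p1 p2
  proof -
    have "(\<Sum>p\<in>?S. of_real (?L (\<lambda>x. of_bool (x = p)) r) * V p)
      = (\<Sum>p\<in>?S. of_real c1 * (of_real (of_bool (p1 = p)) * V p) + of_real c2 * (of_real (of_bool (p2 = p)) * V p)
          - of_real c3 * (of_real (\<Sum>k<m. A $$ (i, k) * of_bool ((delta k, k) = p)) * V p))"
      by (simp only: that(3) of_real_add of_real_diff of_real_mult distrib_right left_diff_distrib mult.assoc)
    also have "\<dots> = ?L V r"
      by (simp only: sum.distrib sum_subtractf unit[OF that(1)] unit[OF that(2)] feedback that(4)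
          flip: sum_distrib_left)
    finally show ?thesis .
  qed
  let ?g = "cdm_G m lam A q i (cdm_adults m delta y)"
  let ?c = "cdm_sensitivity m delta lam A q y i"
  consider "delta i > 0" "a = 0" | "0 < a" "a < delta i" | "delta i > 0" "a = delta i" | "delta i = 0"
    using a by linarith
  then show ?thesis
  proof cases
    case 1
    show ?thesis
      by (rule combination[of "(delta i, i)" "(delta i, i)" ?g 0 ?c])
        (use 1 i in \<open>auto simp: r_ai cdm_linearization_def Let_def mem_cdm_states\<close>)
  next
    case 2
    show ?thesis
      by (rule combination[of "(a - 1, i)" "(a - 1, i)" "sigma (a - 1) i" 0 0])
        (use 2 i in \<open>auto simp: r_ai cdm_linearization_def Let_def mem_cdm_states\<close>)
  next
    case 3
    show ?thesis
      by (rule combination[of "(delta i - 1, i)" "(delta i, i)" "sigma (delta i - 1) i" "sigma (delta i) i" 0])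
        (use 3 i in \<open>auto simp: r_ai cdm_linearization_def Let_def mem_cdm_states\<close>)
  next
    case 4
    show ?thesis
      by (rule combination[of "(0, i)" "(0, i)" "sigma 0 i + ?g" 0 ?c])
        (use 4 i in \<open>auto simp: r_ai cdm_linearization_def Let_def mem_cdm_states\<close>)
  qed
qed

lemma cdm_jacobian_carrier:
  "cdm_jacobian m delta sigma lam A q y \<in> carrier_mat (length (cdm_states m delta)) (length (cdm_states m delta))"
  by (simp add: cdm_jacobian_def Let_def)

lemma cdm_jacobian_entry:
  assumes "\<And>i. i < m \<Longrightarrow> cdm_denom m delta A q y i \<noteq> 0"
    and "r < length (cdm_states m delta)" "s < length (cdm_states m delta)"
  shows "cdm_jacobian m delta sigma lam A q y $$ (r, s) =
    cdm_linearization m delta sigma lam A q y (\<lambda>p. of_bool (p = cdm_states m delta ! s)) (cdm_states m delta ! r)"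
proof -
  obtain a i where r: "cdm_states m delta ! r = (a, i)" by force
  then have "i < m" using assms(2) nth_mem[OF assms(2)] by (simp add: mem_cdm_states)
  then show ?thesis using assms(2,3)
    by (simp add: cdm_jacobian_def Let_def r DERIV_imp_deriv cdm_h_has_partial assms(1))
qed

definition vec_on_list :: "'b list \<Rightarrow> 'a vec \<Rightarrow> 'b \<Rightarrow> 'a" where
  "vec_on_list xs v p = v $ the_inv_into {..<length xs} ((!) xs) p"

lemma vec_on_list_nth: "distinct xs \<Longrightarrow> j < length xs \<Longrightarrow> vec_on_list xs v (xs ! j) = v $ j"
  by (simp add: vec_on_list_def the_inv_into_f_f inj_on_nth)

lemma cdm_jacobian_eigen_linearization:
  assumes denom: "\<And>i. i < m \<Longrightarrow> cdm_denom m delta A q y i \<noteq> 0"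
    and v: "v \<in> carrier_vec (length (cdm_states m delta))"
    and eigen: "map_mat complex_of_real (cdm_jacobian m delta sigma lam A q y) *\<^sub>v v = \<mu> \<cdot>\<^sub>v v"
    and r: "r \<in> set (cdm_states m delta)"
  shows "cdm_linearization m delta sigma lam A q y (vec_on_list (cdm_states m delta) v) r
    = \<mu> * vec_on_list (cdm_states m delta) v r"
proof -
  let ?S = "cdm_states m delta"
  let ?J = "cdm_jacobian m delta sigma lam A q y"
  let ?V = "vec_on_list ?S v"
  obtain j where j: "j < length ?S" "?S ! j = r" using r by (metis in_set_conv_nth)
  have "\<mu> * ?V r = (map_mat complex_of_real ?J *\<^sub>v v) $ j"
    using eigen j v distinct_cdm_states by (simp add: vec_on_list_nth flip: j(2))
  also have "\<dots> = (\<Sum>l<length ?S. complex_of_real (?J $$ (j, l)) * v $ l)"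
    using j v cdm_jacobian_carrier[of m delta sigma lam A q y]
    by (simp add: mult_mat_vec_def scalar_prod_def row_def atLeast0LessThan)
  also have "\<dots> = (\<Sum>l<length ?S. of_real (cdm_linearization m delta sigma lam A q y
      (\<lambda>p. of_bool (p = ?S ! l)) r) * ?V (?S ! l))"
    using j by (intro sum.cong) (simp_all add: cdm_jacobian_entry[OF denom] vec_on_list_nth distinct_cdm_states)
  also have "\<dots> = (\<Sum>p\<in>set ?S. of_real (cdm_linearization m delta sigma lam A q y
      (\<lambda>x. of_bool (x = p)) r) * ?V p)"
    by (rule sum_cdm_states_nth)
  also have "\<dots> = cdm_linearization m delta sigma lam A q y ?V r"
    by (rule cdm_linearization_eq_sum_partials[OF r])
  finally show ?thesis by simp
qed

locale cdm_eigenfunction =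
  fixes m :: nat and delta :: "nat \<Rightarrow> nat" and sigma :: "nat \<Rightarrow> nat \<Rightarrow> real" and lam :: "nat \<Rightarrow> real"
    and A :: "real mat" and q :: "real vec" and y :: "nat \<times> nat \<Rightarrow> real"
    and V :: "nat \<times> nat \<Rightarrow> complex" and \<mu> :: complex
  assumes eigen: "\<And>r. r \<in> set (cdm_states m delta) \<Longrightarrow> cdm_linearization m delta sigma lam A q y V r = \<mu> * V r"
begin

abbreviation feedback :: "nat \<Rightarrow> complex" where
  "feedback i \<equiv> \<Sum>k<m. of_real (A $$ (i, k)) * V (delta k, k)"

abbreviation growth :: "nat \<Rightarrow> real" where
  "growth i \<equiv> cdm_G m lam A q i (cdm_adults m delta y)"

abbreviation sensitivity :: "nat \<Rightarrow> real" where
  "sensitivity i \<equiv> cdm_sensitivity m delta lam A q y i"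

lemma eigen_at: "i < m \<Longrightarrow> a \<le> delta i \<Longrightarrow> cdm_linearization m delta sigma lam A q y V (a, i) = \<mu> * V (a, i)"
  by (rule eigen) (simp add: mem_cdm_states)

lemma eigen_newborn:
  "i < m \<Longrightarrow> 0 < delta i \<Longrightarrow> \<mu> * V (0, i) = of_real (growth i) * V (delta i, i) - of_real (sensitivity i) * feedback i"
  using eigen_at[of i 0] by (simp add: cdm_linearization_def Let_def)

lemma eigen_juvenile:
  "i < m \<Longrightarrow> 0 < a \<Longrightarrow> a < delta i \<Longrightarrow> \<mu> * V (a, i) = of_real (sigma (a - 1) i) * V (a - 1, i)"
  using eigen_at[of i a] by (simp add: cdm_linearization_def Let_def)

lemma eigen_adult:
  "i < m \<Longrightarrow> 0 < delta i \<Longrightarrow>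
    \<mu> * V (delta i, i) = of_real (sigma (delta i - 1) i) * V (delta i - 1, i) + of_real (sigma (delta i) i) * V (delta i, i)"
  using eigen_at[of i "delta i"] by (simp add: cdm_linearization_def Let_def)

lemma eigen_undelayed:
  "i < m \<Longrightarrow> delta i = 0 \<Longrightarrow>
    \<mu> * V (0, i) = of_real (sigma 0 i + growth i) * V (0, i) - of_real (sensitivity i) * feedback i"
  using eigen_at[of i 0] by (simp add: cdm_linearization_def Let_def)

lemma eigen_juvenile_power:
  assumes "i < m" "a < delta i"
  shows "\<mu> ^ a * V (a, i) = of_real (\<Prod>b<a. sigma b i) * V (0, i)"
  using assms(2)
proof (induction a)
  case (Suc a)
  have "\<mu> ^ Suc a * V (Suc a, i) = \<mu> ^ a * (\<mu> * V (Suc a, i))" by (simp add: algebra_simps)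
  also have "\<dots> = of_real (sigma a i) * (\<mu> ^ a * V (a, i))"
    using eigen_juvenile[OF assms(1), of "Suc a"] Suc.prems by (simp add: algebra_simps)
  finally show ?case using Suc by (simp add: algebra_simps)
qed simp

lemma eigen_adult_characteristic:
  assumes i: "i < m"
  shows "\<mu> ^ delta i * (\<mu> - of_real (sigma (delta i) i)) * V (delta i, i)
    = of_real ((\<Prod>b<delta i. sigma b i) * growth i) * V (delta i, i)
      - of_real ((\<Prod>b<delta i. sigma b i) * sensitivity i) * feedback i"
proof (cases "delta i")
  case 0
  then show ?thesis using eigen_undelayed[OF i] by (simp add: algebra_simps)
next
  case (Suc d)
  have adult: "(\<mu> - of_real (sigma (delta i) i)) * V (delta i, i) = of_real (sigma d i) * V (d, i)"
    using eigen_adult[OF i] Suc by (simp add: algebra_simps)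
  have "\<mu> ^ delta i * (\<mu> - of_real (sigma (delta i) i)) * V (delta i, i)
      = \<mu> * \<mu> ^ d * ((\<mu> - of_real (sigma (delta i) i)) * V (delta i, i))"
    using Suc by (simp add: algebra_simps)
  also have "\<dots> = of_real (sigma d i) * (\<mu> * (\<mu> ^ d * V (d, i)))"
    unfolding adult by (simp add: algebra_simps)
  also have "\<dots> = of_real (\<Prod>b<delta i. sigma b i) * (\<mu> * V (0, i))"
    using eigen_juvenile_power[OF i, of d] Suc by (simp add: algebra_simps)
  finally show ?thesis using eigen_newborn[OF i] Suc by (simp add: algebra_simps)
qed

lemma eigen_zero_if_adults_zero:
  assumes "\<mu> \<noteq> 0" "\<And>k. k < m \<Longrightarrow> V (delta k, k) = 0" "r \<in> set (cdm_states m delta)"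
  shows "V r = 0"
proof -
  obtain a i where r: "r = (a, i)" by (cases r)
  with assms(3) have i: "i < m" and a: "a \<le> delta i" by (auto simp: mem_cdm_states)
  show ?thesis
  proof (cases "a = delta i")
    case False
    moreover have "feedback i = 0" using assms(2) by simp
    ultimately have "V (0, i) = 0" using eigen_newborn[OF i] assms(1) assms(2)[OF i] a by simp
    then show ?thesis using eigen_juvenile_power[OF i, of a] False r a assms(1) by simp
  qed (use assms(2) r i in simp)
qed

end

lemma norm_power_mult_diff_ge:
  fixes \<mu> :: complex
  assumes "1 \<le> cmod \<mu>" "0 \<le> s"
  shows "1 - s \<le> cmod (\<mu> ^ d * (\<mu> - of_real s))"
proof -
  have "1 - s \<le> cmod (\<mu> - of_real s)"
    using norm_triangle_ineq2[of \<mu> "of_real s"] assms by simp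
  also have "\<dots> \<le> cmod \<mu> ^ d * cmod (\<mu> - of_real s)"
    using mult_right_mono[OF one_le_power[OF assms(1)], of "cmod (\<mu> - of_real s)" d] by simp
  finally show ?thesis by (simp add: norm_mult norm_power)
qed

lemma eq_zero_if_feedback_dominated:
  fixes P U R :: complex
  assumes eq: "P * U = of_real z * U - of_real w * (of_real a * U + R)"
    and R: "cmod R \<le> s * cmod U" and "s < a" "0 < w" "w * a \<le> z" "z \<le> cmod P"
  shows "U = 0"
proof (rule ccontr)
  assume "U \<noteq> 0"
  have "cmod (of_real (z - w * a) :: complex) = z - w * a"
    by (simp only: norm_of_real) (use assms in simp)
  then have "w * a \<le> cmod (P - of_real (z - w * a))"
    using norm_triangle_ineq2[of P "of_real (z - w * a)"] assms by linarith
  then have "w * a * cmod U \<le> cmod ((P - of_real (z - w * a)) * U)"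
    by (simp add: norm_mult mult_right_mono)
  also have "(P - of_real (z - w * a)) * U = - of_real w * R"
    using eq by (simp add: algebra_simps)
  also have "cmod (- of_real w * R) \<le> w * (s * cmod U)"
    using R \<open>0 < w\<close> by (simp add: norm_mult)
  finally show False using \<open>U \<noteq> 0\<close> \<open>s < a\<close> \<open>0 < w\<close> by simp
qed

locale cdm_dominant_equilibrium =
  fixes m :: nat and delta :: "nat \<Rightarrow> nat" and sigma :: "nat \<Rightarrow> nat \<Rightarrow> real" and lam :: "nat \<Rightarrow> real"
    and A :: "real mat" and q :: "real vec" and y :: "nat \<times> nat \<Rightarrow> real"
  assumes sigma_pos: "\<And>i a. i < m \<Longrightarrow> a \<le> delta i \<Longrightarrow> 0 < sigma a i"
    and adult_survival_lt_1: "\<And>i. i < m \<Longrightarrow> sigma (delta i) i < 1"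
    and lam_pos: "\<And>i. i < m \<Longrightarrow> 0 < lam i"
    and q_pos: "\<And>i. i < m \<Longrightarrow> 0 < q $ i"
    and adults_pos: "\<And>i. i < m \<Longrightarrow> 0 < y (delta i, i)"
    and A_nonneg: "\<And>i j. i < m \<Longrightarrow> j < m \<Longrightarrow> 0 \<le> A $$ (i, j)"
    and A_dominant: "\<And>i. i < m \<Longrightarrow> (\<Sum>j\<in>{0..<m} - {i}. A $$ (i, j)) < A $$ (i, i)"
    and ltilde_gt_z: "\<And>i. i < m \<Longrightarrow> cdm_z delta sigma i < cdm_ltilde delta sigma lam i"
    and equilibrium: "\<And>i. i < m \<Longrightarrow> (\<Sum>k<m. A $$ (i, k) * y (delta k, k))
      = (cdm_ltilde delta sigma lam i - cdm_z delta sigma i) / cdm_z delta sigma i * q $ i"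
begin

abbreviation survival :: "nat \<Rightarrow> real" where
  "survival i \<equiv> \<Prod>b<delta i. sigma b i"

lemma z_pos: "i < m \<Longrightarrow> 0 < cdm_z delta sigma i"
  using adult_survival_lt_1 by (simp add: cdm_z_def)

lemma survival_pos: "i < m \<Longrightarrow> 0 < survival i"
  using sigma_pos[of i] by (auto intro!: prod_pos)

lemma denom_eq: "i < m \<Longrightarrow> cdm_denom m delta A q y i = cdm_ltilde delta sigma lam i / cdm_z delta sigma i"
  using equilibrium[of i] q_pos[of i] z_pos[of i] by (simp add: cdm_denom_def field_simps)

lemma denom_pos: "i < m \<Longrightarrow> 0 < cdm_denom m delta A q y i"
  using denom_eq z_pos ltilde_gt_z by (metis divide_pos_pos order.strict_trans)

lemma survival_growth_eq_z:
  assumes i: "i < m"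
  shows "survival i * cdm_G m lam A q i (cdm_adults m delta y) = cdm_z delta sigma i"
proof -
  have "cdm_ltilde delta sigma lam i = lam i * survival i" by (simp add: cdm_ltilde_def)
  then show ?thesis using z_pos[OF i] survival_pos[OF i] lam_pos[OF i]
    by (simp add: cdm_G_adults denom_eq[OF i] field_simps del: prod_zero_iff)
qed

lemma sensitivity_pos: "i < m \<Longrightarrow> 0 < cdm_sensitivity m delta lam A q y i"
  using lam_pos[of i] adults_pos[of i] q_pos[of i] denom_pos[of i] by (simp add: cdm_sensitivity_def)

lemma survival_sensitivity_diag_le_z:
  assumes i: "i < m"
  shows "survival i * cdm_sensitivity m delta lam A q y i * A $$ (i, i) \<le> cdm_z delta sigma i"
proof -
  let ?D = "cdm_denom m delta A q y i" and ?x = "y (delta i, i)"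
  have "A $$ (i, i) * ?x \<le> (\<Sum>k<m. A $$ (i, k) * y (delta k, k))"
    using member_le_sum[of i "{..<m}" "\<lambda>k. A $$ (i, k) * y (delta k, k)"] i A_nonneg adults_pos
    by (simp add: less_imp_le)
  then have "A $$ (i, i) * ?x / q $ i \<le> (\<Sum>k<m. A $$ (i, k) * y (delta k, k)) / q $ i"
    using q_pos[OF i] by (simp add: divide_right_mono)
  also have "\<dots> \<le> ?D" by (simp add: cdm_denom_def)
  finally have "A $$ (i, i) * ?x / q $ i \<le> ?D" .
  then have ratio: "A $$ (i, i) * ?x / (q $ i * ?D) \<le> 1"
    using denom_pos[OF i] q_pos[OF i] by (simp add: field_simps)
  have "survival i * cdm_sensitivity m delta lam A q y i * A $$ (i, i)
      = survival i * cdm_G m lam A q i (cdm_adults m delta y) * (A $$ (i, i) * ?x / (q $ i * ?D))"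
    by (simp add: cdm_sensitivity_def cdm_G_adults power2_eq_square field_simps)
  also have "\<dots> = cdm_z delta sigma i * (A $$ (i, i) * ?x / (q $ i * ?D))"
    by (simp add: survival_growth_eq_z[OF i])
  also have "\<dots> \<le> cdm_z delta sigma i"
    using mult_left_le[OF ratio] z_pos[OF i] by simp
  finally show ?thesis .
qed

lemma eigen_adults_zero:
  assumes "cdm_eigenfunction m delta sigma lam A q y V \<mu>" and \<mu>: "1 \<le> cmod \<mu>" and k: "k < m"
  shows "V (delta k, k) = 0"
proof -
  interpret cdm_eigenfunction m delta sigma lam A q y V \<mu> by fact
  obtain i where i: "i < m" and imax: "\<And>k. k < m \<Longrightarrow> cmod (V (delta k, k)) \<le> cmod (V (delta i, i))"
    using finite_has_max_index[of "{..<m}" "\<lambda>k. cmod (V (delta k, k))"] k by auto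
  let ?R = "feedback i - of_real (A $$ (i, i)) * V (delta i, i)"
  have R: "cmod ?R \<le> (\<Sum>j\<in>{0..<m} - {i}. A $$ (i, j)) * cmod (V (delta i, i))"
    using offdiag_sum_norm_le[of i m "\<lambda>k. A $$ (i, k)" "\<lambda>k. V (delta k, k)"] i A_nonneg imax
    by (simp add: scaleR_conv_of_real)
  have "V (delta i, i) = 0"
  proof (rule eq_zero_if_feedback_dominated[OF _ R A_dominant[OF i]])
    show "\<mu> ^ delta i * (\<mu> - of_real (sigma (delta i) i)) * V (delta i, i)
      = of_real (cdm_z delta sigma i) * V (delta i, i)
        - of_real (survival i * cdm_sensitivity m delta lam A q y i)
          * (of_real (A $$ (i, i)) * V (delta i, i) + ?R)"
      using eigen_adult_characteristic[OF i] survival_growth_eq_z[OF i] by simp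
    show "0 < survival i * cdm_sensitivity m delta lam A q y i"
      using survival_pos[OF i] sensitivity_pos[OF i] by simp
    show "survival i * cdm_sensitivity m delta lam A q y i * A $$ (i, i) \<le> cdm_z delta sigma i"
      by (rule survival_sensitivity_diag_le_z[OF i])
    show "cdm_z delta sigma i \<le> cmod (\<mu> ^ delta i * (\<mu> - of_real (sigma (delta i) i)))"
      using norm_power_mult_diff_ge[OF \<mu>, of "sigma (delta i) i"] sigma_pos[OF i order.refl]
      by (simp add: cdm_z_def)
  qed
  then show ?thesis using imax[OF k] by simp
qed

lemma jacobian_spectral_radius_lt_1:
  assumes "1 \<le> m"
  shows "spectral_radius (map_mat complex_of_real (cdm_jacobian m delta sigma lam A q y)) < 1"
proof (rule ccontr)
  let ?S = "cdm_states m delta"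
  let ?M = "map_mat complex_of_real (cdm_jacobian m delta sigma lam A q y)"
  assume "\<not> spectral_radius ?M < 1"
  have M: "?M \<in> carrier_mat (length ?S) (length ?S)" using cdm_jacobian_carrier by simp
  have "(0, 0) \<in> set ?S" using assms by (simp add: mem_cdm_states)
  then have "0 < length ?S" by (rule length_pos_if_in_set)
  then obtain \<mu> where "spectral_radius ?M = cmod \<mu>" "eigenvalue ?M \<mu>"
    using spectral_radius_mem_max(1)[OF M] unfolding spectrum_def by auto
  with \<open>\<not> spectral_radius ?M < 1\<close> obtain v where \<mu>: "1 \<le> cmod \<mu>"
    and v: "v \<in> carrier_vec (length ?S)" "v \<noteq> 0\<^sub>v (length ?S)" "?M *\<^sub>v v = \<mu> \<cdot>\<^sub>v v"
    using M unfolding eigenvalue_def eigenvector_def by auto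
  let ?V = "vec_on_list ?S v"
  have eigenfunction: "cdm_eigenfunction m delta sigma lam A q y ?V \<mu>"
    using cdm_jacobian_eigen_linearization[OF _ v(1,3)] denom_pos
    by unfold_locales (simp add: less_imp_neq[symmetric])
  have "\<mu> \<noteq> 0" using \<mu> by auto
  have V0: "?V p = 0" if "p \<in> set ?S" for p
    by (rule cdm_eigenfunction.eigen_zero_if_adults_zero[OF eigenfunction \<open>\<mu> \<noteq> 0\<close>
          eigen_adults_zero[OF eigenfunction \<mu>] that])
  have "v $ j = 0" if "j < length ?S" for j
    using V0[OF nth_mem[OF that]] vec_on_list_nth[OF distinct_cdm_states that, where v = v] by simp
  then have "v = 0\<^sub>v (length ?S)"
    using v(1) by (intro eq_vecI) auto
  with v(2) show False ..
qed

end

theorem proposition1: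
  fixes m :: nat and delta :: "nat \<Rightarrow> nat" and sigma :: "nat \<Rightarrow> nat \<Rightarrow> real"
    and lam :: "nat \<Rightarrow> real" and A :: "real mat"
  assumes m: "m \<ge> 1"
    and sig_juv: "\<And>i a. i < m \<Longrightarrow> a < delta i \<Longrightarrow> 0 < sigma a i \<and> sigma a i \<le> 1"
    and sig_ad: "\<And>i. i < m \<Longrightarrow> 0 < sigma (delta i) i \<and> sigma (delta i) i < 1"
    and lam_pos: "\<And>i. i < m \<Longrightarrow> lam i > 0"
    and lt_z: "\<And>i. i < m \<Longrightarrow> cdm_ltilde delta sigma lam i > cdm_z delta sigma i \<and> cdm_z delta sigma i > 0"
    and A_dim: "A \<in> carrier_mat m m"
    and A_nonneg: "\<And>i j. i < m \<Longrightarrow> j < m \<Longrightarrow> A $$ (i, j) \<ge> 0"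
    and A_dd: "\<And>i. i < m \<Longrightarrow> A $$ (i, i) > (\<Sum>j\<in>{0..<m} - {i}. A $$ (i, j))"
  shows "invertible_mat A
    \<and> (\<forall>x. dim_vec x = m \<and> (\<forall>i<m. x $ i > 0) \<longrightarrow>
          (\<exists>!q. dim_vec q = m \<and> (\<forall>i<m. q $ i > 0) \<and>
               A *\<^sub>v x = vec m (\<lambda>i. (cdm_ltilde delta sigma lam i - cdm_z delta sigma i)
                                     / cdm_z delta sigma i * q $ i)))
    \<and> (\<forall>q x y. dim_vec q = m \<and> (\<forall>i<m. q $ i > 0) \<and>
          dim_vec x = m \<and> (\<forall>i<m. x $ i > 0) \<and>
          A *\<^sub>v x = vec m (\<lambda>i. (cdm_ltilde delta sigma lam i - cdm_z delta sigma i)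
                                / cdm_z delta sigma i * q $ i) \<and>
          (\<forall>p\<in>set (cdm_states m delta). cdm_h m delta sigma lam A q y p = y p) \<and>
          (\<forall>i<m. y (delta i, i) = x $ i)
        \<longrightarrow> spectral_radius (map_mat complex_of_real (cdm_jacobian m delta sigma lam A q y)) < 1)"
proof (intro conjI allI impI)
  show "invertible_mat A" by (rule diag_dominant_invertible_mat[OF A_dim A_nonneg A_dd])
next
  fix x :: "real vec" assume x: "dim_vec x = m \<and> (\<forall>i<m. x $ i > 0)"
  show "\<exists>!q. dim_vec q = m \<and> (\<forall>i<m. q $ i > 0) \<and>
      A *\<^sub>v x = vec m (\<lambda>i. (cdm_ltilde delta sigma lam i - cdm_z delta sigma i) / cdm_z delta sigma i * q $ i)"
    using x A_dim lt_z diag_dominant_mult_pos[OF A_dim A_nonneg A_dd, of x] by (intro ex1_pos_scaling) auto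
next
  fix q x :: "real vec" and y :: "nat \<times> nat \<Rightarrow> real"
  assume H: "dim_vec q = m \<and> (\<forall>i<m. q $ i > 0) \<and> dim_vec x = m \<and> (\<forall>i<m. x $ i > 0) \<and>
    A *\<^sub>v x = vec m (\<lambda>i. (cdm_ltilde delta sigma lam i - cdm_z delta sigma i) / cdm_z delta sigma i * q $ i) \<and>
    (\<forall>p\<in>set (cdm_states m delta). cdm_h m delta sigma lam A q y p = y p) \<and> (\<forall>i<m. y (delta i, i) = x $ i)"
  txt \<open>The Jacobian depends on \<open>y\<close> only through the adult densities.\<close>
  interpret cdm_dominant_equilibrium m delta sigma lam A q y
  proof
    show "0 < sigma a i" if "i < m" "a \<le> delta i" for i a
      using sig_juv[OF that(1)] sig_ad[OF that(1)] that(2) by (cases "a = delta i") auto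
    show "(\<Sum>k<m. A $$ (i, k) * y (delta k, k))
      = (cdm_ltilde delta sigma lam i - cdm_z delta sigma i) / cdm_z delta sigma i * q $ i" if "i < m" for i
      using H mult_mat_vec_index_sum[OF A_dim _ that, of x] that by simp
  qed (use H sig_ad lam_pos lt_z A_nonneg A_dd in auto)
  show "spectral_radius (map_mat complex_of_real (cdm_jacobian m delta sigma lam A q y)) < 1"
    by (rule jacobian_spectral_radius_lt_1[OF m])
qed

end
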